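(* Let $T\ge 3$ be an integer. For each integer $N\ge 1$ define $$\psi_j=\psi_j(N,T)=\frac{\pi\bigl(2+T(2j-1)\bigr)}{2+(N-1)T},$$ and $$P_N=\frac{T}{2+(N-1)T}\prod_{j=1}^{\frac{N-2}{2}}\cot^2\frac{\psi_j}{2}\quad\text{if $N$ is even},\qquad P_N=\prod_{j=1}^{\frac{N-1}{2}}\cot^2\frac{\psi_j}{2}\quad\text{if $N$ is odd}$$ (an empty product equals $1$). Then $$\lim_{N\to\infty} P_N\, N^{2/T}=\pi^{\frac{2-T}{T}}\left(\Gamma\!\left(\frac{T+2}{2T}\right)\right)^2 .$$ In particular $P_N\asymp N^{-2/T}$ as $N\to\infty$.
   Context: $\Gamma$ denotes the Euler Gamma function. The limit is taken over all integers $N\to\infty$ (both parities), with $T$ fixed. *)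

theory Defs
  imports "HOL-Analysis.Analysis"
begin

definition psi :: "nat \<Rightarrow> nat \<Rightarrow> nat \<Rightarrow> real" where
  "psi N T j = pi * (2 + real T * (2 * real j - 1)) / (2 + (real N - 1) * real T)"

definition P :: "nat \<Rightarrow> nat \<Rightarrow> real" where
  "P T N = (if even N
     then real T / (2 + (real N - 1) * real T) *
          (\<Prod>j = 1..(N - 2) div 2. (cot (psi N T j / 2))^2)
     else (\<Prod>j = 1..(N - 1) div 2. (cot (psi N T j / 2))^2))"

end

theory Submission
  imports Defs "HOL-Real_Asymp.Real_Asymp" "HOL-Probability.Characteristic_Functions"
begin

text \<open>
  Write \<open>a = 2/T\<close> and \<open>N = 2m + 1 + c\<close> with \<open>c \<in> {0, 1}\<close>. The angles \<open>\<psi>\<^sub>j/2\<close> and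
  \<open>\<pi>/2 - \<psi>\<^sub>j/2\<close> are the points \<open>h(2k + 1 + a)\<close> and \<open>h(2k + 1 + c)\<close> of a grid of mesh
  \<open>2h\<close>, \<open>h = \<pi>/(2(N - 1 + a))\<close>, so the product of the squared cotangents is the square of
  the product over \<open>k < m\<close> of \<open>sin (h(2k + 1 + c)) / sin (h(2k + 1 + a))\<close>. Factoring
  \<open>sin x = x exp (g x)\<close> with \<open>g x = ln (sin x / x)\<close>, the linear factors give a ratio of
  Pochhammer symbols, asymptotic to \<open>m powr ((c - a)/2) \<Gamma>((1 + a)/2) / \<Gamma>((1 + c)/2)\<close>, and the
  exponential factors give a Riemann sum of \<open>g'\<close> with weight \<open>(c - a)/2\<close> per cell, which
  tends to \<open>(c - a)/2 \<cdot> g(\<pi>/2) = (c - a)/2 \<cdot> ln (2/\<pi>)\<close>.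
\<close>

lemma MVT_in_interval:
  fixes f f' :: "real \<Rightarrow> real"
  assumes cont: "continuous_on {L..U} f"
    and deriv: "\<And>t. L < t \<Longrightarrow> t < U \<Longrightarrow> (f has_real_derivative f' t) (at t)"
    and x: "x \<in> {L..U}" and y: "y \<in> {L..U}"
  shows "\<exists>z\<in>{L..U}. f x - f y = (x - y) * f' z"
proof -
  have ordered: "\<exists>z\<in>{L..U}. f v - f u = (v - u) * f' z"
    if "u < v" "u \<in> {L..U}" "v \<in> {L..U}" for u v
  proof -
    have "continuous_on {u..v} f" using cont by (rule continuous_on_subset) (use that in auto)
    moreover have "f differentiable (at t)" if "u < t" "t < v" for t
      using deriv[of t] that \<open>u \<in> {L..U}\<close> \<open>v \<in> {L..U}\<close> real_differentiable_def by fastforce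
    ultimately obtain l z where "u < z" "z < v" "DERIV f z :> l" "f v - f u = (v - u) * l"
      using MVT[OF \<open>u < v\<close>] by blast
    moreover have "DERIV f z :> f' z" using that \<open>u < z\<close> \<open>z < v\<close> by (intro deriv) auto
    ultimately show ?thesis using that DERIV_unique by (intro bexI[of _ z]) auto
  qed
  consider "y < x" | "x < y" | "x = y" by linarith
  then show ?thesis
  proof cases
    case 2
    then obtain z where "z \<in> {L..U}" "f y - f x = (y - x) * f' z" using ordered x y by blast
    then show ?thesis by (intro bexI[of _ z]) (auto simp: algebra_simps)
  qed (use ordered x y in auto)
qed

lemma shifted_difference_approx:
  fixes f f' :: "real \<Rightarrow> real"
  assumes cont: "continuous_on {0..b} f"
    and deriv: "\<And>t. 0 < t \<Longrightarrow> t < b \<Longrightarrow> (f has_real_derivative f' t) (at t)"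
    and osc: "\<And>z w. z \<in> {0..b} \<Longrightarrow> w \<in> {0..b} \<Longrightarrow> \<bar>z - w\<bar> \<le> 2 * h \<Longrightarrow> \<bar>f' z - f' w\<bar> \<le> r"
    and h: "h > 0" and L: "0 \<le> L" "L + 2 * h \<le> b"
    and c: "c \<in> {0..1}" and d: "d \<in> {0..1}"
  shows "\<bar>(f (L + h * (1 + c)) - f (L + h * (1 + d))) - (c - d) / 2 * (f (L + 2 * h) - f L)\<bar>
           \<le> h * \<bar>c - d\<bar> * r"
proof -
  let ?I = "{L..L + 2 * h}"
  have sub: "?I \<subseteq> {0..b}" using L by auto
  have cont': "continuous_on ?I f" using cont sub by (rule continuous_on_subset)
  have deriv': "(f has_real_derivative f' t) (at t)" if "L < t" "t < L + 2 * h" for t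
    using that L by (intro deriv) auto
  obtain z1 where z1: "z1 \<in> ?I" "f (L + h * (1 + c)) - f (L + h * (1 + d)) = h * (c - d) * f' z1"
    using MVT_in_interval[OF cont' deriv', of "L + h * (1 + c)" "L + h * (1 + d)"] h c d
    by (auto simp: algebra_simps)
  obtain z2 where z2: "z2 \<in> ?I" "f (L + 2 * h) - f L = 2 * h * f' z2"
    using MVT_in_interval[OF cont' deriv', of "L + 2 * h" L] h by auto
  have "\<bar>f' z1 - f' z2\<bar> \<le> r" using z1(1) z2(1) sub by (intro osc) auto
  moreover have "h * (c - d) * f' z1 - (c - d) / 2 * (2 * h * f' z2) = h * (c - d) * (f' z1 - f' z2)"
    by (simp add: field_simps)
  ultimately show ?thesis unfolding z1(2) z2(2) using h by (simp add: abs_mult mult_left_mono)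
qed

text \<open>
  Each summand approximates \<open>(c - d)/2\<close> times the increment of \<open>f\<close> over the cell
  \<open>[2kh, 2(k+1)h]\<close>, and these increments telescope.
\<close>

lemma sum_shifted_differences_approx:
  fixes f f' :: "real \<Rightarrow> real"
  assumes cont: "continuous_on {0..b} f"
    and deriv: "\<And>t. 0 < t \<Longrightarrow> t < b \<Longrightarrow> (f has_real_derivative f' t) (at t)"
    and osc: "\<And>z w. z \<in> {0..b} \<Longrightarrow> w \<in> {0..b} \<Longrightarrow> \<bar>z - w\<bar> \<le> 2 * h \<Longrightarrow> \<bar>f' z - f' w\<bar> \<le> r"
    and h: "h > 0" and m: "2 * h * real m \<le> b"
    and c: "c \<in> {0..1}" and d: "d \<in> {0..1}"
  shows "\<bar>(\<Sum>k<m. f (h * (2 * real k + 1 + c)) - f (h * (2 * real k + 1 + d)))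
            - (c - d) / 2 * (f (2 * h * real m) - f 0)\<bar> \<le> real m * (h * \<bar>c - d\<bar> * r)"
proof -
  define e where "e k = (f (h * (2 * real k + 1 + c)) - f (h * (2 * real k + 1 + d)))
    - (c - d) / 2 * (f (2 * h * real (Suc k)) - f (2 * h * real k))" for k
  have "(\<Sum>k<m. (c - d) / 2 * (f (2 * h * real (Suc k)) - f (2 * h * real k)))
      = (c - d) / 2 * (f (2 * h * real m) - f 0)"
    unfolding sum_distrib_left[symmetric]
    using sum_lessThan_telescope[of "\<lambda>k. f (2 * h * real k)" m] by simp
  then have "(\<Sum>k<m. f (h * (2 * real k + 1 + c)) - f (h * (2 * real k + 1 + d)))
      - (c - d) / 2 * (f (2 * h * real m) - f 0) = (\<Sum>k<m. e k)"
    by (simp add: e_def sum_subtractf)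
  moreover have "\<bar>e k\<bar> \<le> h * \<bar>c - d\<bar> * r" if "k < m" for k
  proof -
    have "2 * h * (real k + 1) \<le> 2 * h * real m"
      using that h by (intro mult_left_mono) auto
    then show ?thesis
      using shifted_difference_approx[OF cont deriv osc h, of "2 * h * real k" c d] h m c d
      by (simp add: e_def algebra_simps)
  qed
  then have "\<bar>\<Sum>k<m. e k\<bar> \<le> (\<Sum>k<m. h * \<bar>c - d\<bar> * r)"
    by (intro order.trans[OF sum_abs sum_mono]) auto
  ultimately show ?thesis by simp
qed

lemma sum_shifted_differences_tendsto:
  fixes f f' :: "real \<Rightarrow> real" and h :: "nat \<Rightarrow> real"
  assumes cont: "continuous_on {0..b} f"
    and deriv: "\<And>t. 0 < t \<Longrightarrow> t < b \<Longrightarrow> (f has_real_derivative f' t) (at t)"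
    and cont': "continuous_on {0..b} f'"
    and c: "c \<in> {0..1}" and d: "d \<in> {0..1}"
    and h_pos: "\<And>m. h m > 0" and h_bound: "\<And>m. 2 * h m * real m \<le> b"
    and h_lim: "h \<longlonglongrightarrow> 0" and end_lim: "(\<lambda>m. 2 * h m * real m) \<longlonglongrightarrow> b"
  shows "(\<lambda>m. \<Sum>k<m. f (h m * (2 * real k + 1 + c)) - f (h m * (2 * real k + 1 + d)))
           \<longlonglongrightarrow> (c - d) / 2 * (f b - f 0)"
proof -
  define S where "S m = (\<Sum>k<m. f (h m * (2 * real k + 1 + c)) - f (h m * (2 * real k + 1 + d)))" for m
  define E where "E m = S m - (c - d) / 2 * (f (2 * h m * real m) - f 0)" for m
  have b: "0 \<le> b" using h_bound[of 0] by simp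
  have E_small: "\<forall>\<^sub>F m in sequentially. \<bar>E m\<bar> \<le> b * r / 2" if r: "r > 0" for r
  proof -
    obtain \<delta> where "\<delta> > 0" and uc: "\<And>x y. x \<in> {0..b} \<Longrightarrow> y \<in> {0..b} \<Longrightarrow>
        dist y x < \<delta> \<Longrightarrow> dist (f' y) (f' x) < r"
      using compact_uniformly_continuous[OF cont'] r unfolding uniformly_continuous_on_def
      by (metis compact_Icc)
    have "\<forall>\<^sub>F m in sequentially. h m < \<delta> / 2"
      using order_tendstoD(2)[OF h_lim, of "\<delta> / 2"] \<open>\<delta> > 0\<close> by simp
    then show ?thesis
    proof eventually_elim
      case (elim m)
      have osc: "\<bar>f' z - f' w\<bar> \<le> r" if "z \<in> {0..b}" "w \<in> {0..b}" "\<bar>z - w\<bar> \<le> 2 * h m" for z w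
        using uc[of w z] that elim by (simp add: dist_real_def)
      have "\<bar>E m\<bar> \<le> real m * (h m * \<bar>c - d\<bar> * r)"
        unfolding E_def S_def
        by (rule sum_shifted_differences_approx[OF cont deriv osc h_pos h_bound c d])
      also have "\<dots> \<le> real m * (h m * 1 * r)"
        using c d h_pos[of m] r by (intro mult_left_mono mult_right_mono) auto
      also have "\<dots> = (2 * h m * real m) * r / 2" by simp
      also have "\<dots> \<le> b * r / 2" using h_bound[of m] r by (simp add: mult_right_mono)
      finally show ?case .
    qed
  qed
  have "E \<longlonglongrightarrow> 0"
  proof (rule tendsto_iff[THEN iffD2], intro allI impI)
    fix \<epsilon> :: real assume "\<epsilon> > 0"
    then have "b * (\<epsilon> / (b + 1)) / 2 < \<epsilon>" using b by (simp add: field_simps add_nonneg_pos)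
    with E_small[of "\<epsilon> / (b + 1)"] \<open>\<epsilon> > 0\<close> b show "\<forall>\<^sub>F m in sequentially. dist (E m) 0 < \<epsilon>"
      by (auto elim!: eventually_mono)
  qed
  moreover have "(\<lambda>m. f (2 * h m * real m)) \<longlonglongrightarrow> f b"
    using h_pos h_bound b by (intro continuous_on_tendsto_compose[OF cont end_lim])
      (auto intro!: always_eventually simp: less_imp_le)
  ultimately have "(\<lambda>m. E m + (c - d) / 2 * (f (2 * h m * real m) - f 0)) \<longlonglongrightarrow> 0 + (c - d) / 2 * (f b - f 0)"
    by (intro tendsto_intros)
  then show ?thesis by (simp add: E_def S_def)
qed

lemma continuous_on_Icc_if_at_right:
  fixes f :: "real \<Rightarrow> real"
  assumes "(f \<longlongrightarrow> f a) (at_right a)" "\<And>x. a < x \<Longrightarrow> x \<le> b \<Longrightarrow> isCont f x" "a < b"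
  shows "continuous_on {a..b} f"
  using assms by (intro continuous_on_IccI) (auto intro: tendsto_mono[OF at_le] simp: isCont_def)

definition ln_sinc :: "real \<Rightarrow> real" where
  "ln_sinc x = (if x = 0 then 0 else ln (sin x / x))"

text \<open>The value \<open>0\<close> at the origin is the continuous extension, as for \<open>ln_sinc\<close>.\<close>

definition ln_sinc' :: "real \<Rightarrow> real" where
  "ln_sinc' x = (if x = 0 then 0 else cot x - 1 / x)"

lemma sin_eq_mult_exp_ln_sinc:
  assumes "0 < x" "x < pi"
  shows "sin x = x * exp (ln_sinc x)"
  using assms sin_gt_zero[OF assms] by (simp add: ln_sinc_def)

lemma ln_sinc_eventually_eq:
  assumes "0 < x" "x < pi"
  shows "\<forall>\<^sub>F y in nhds x. ln_sinc y = ln (sin y / y) \<and> ln_sinc' y = cot y - 1 / y"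
  using eventually_nhds_in_open[of "{0<..<pi}" x] assms
  by (auto elim!: eventually_mono simp: ln_sinc_def ln_sinc'_def)

lemma has_real_derivative_ln_sinc:
  assumes "0 < x" "x < pi"
  shows "(ln_sinc has_real_derivative ln_sinc' x) (at x)"
proof -
  have "((\<lambda>y. ln (sin y / y)) has_real_derivative cot x - 1 / x) (at x)"
    using assms sin_gt_zero[OF assms]
    by (auto intro!: derivative_eq_intros simp: cot_def field_simps power2_eq_square)
  then show ?thesis
    using ln_sinc_eventually_eq[OF assms] assms
    by (subst DERIV_cong_ev[OF refl _ refl]) (auto elim!: eventually_mono simp: ln_sinc'_def)
qed

lemma continuous_on_ln_sinc:
  assumes "0 < b" "b < pi"
  shows "continuous_on {0..b} ln_sinc"
proof (rule continuous_on_Icc_if_at_right[OF _ _ \<open>0 < b\<close>])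
  have "((\<lambda>x::real. ln (sin x / x)) \<longlongrightarrow> 0) (at_right 0)" by real_asymp
  then show "(ln_sinc \<longlongrightarrow> ln_sinc 0) (at_right 0)"
    by (rule tendsto_eq_rhs[OF Lim_transform_eventually])
      (auto simp: ln_sinc_def eventually_at_right_less elim!: eventually_mono[OF eventually_at_right_less])
next
  fix x assume "0 < x" "x \<le> b"
  then show "isCont ln_sinc x"
    using assms by (intro DERIV_isCont[OF has_real_derivative_ln_sinc]) auto
qed

lemma continuous_on_ln_sinc':
  assumes "0 < b" "b < pi"
  shows "continuous_on {0..b} ln_sinc'"
proof (rule continuous_on_Icc_if_at_right[OF _ _ \<open>0 < b\<close>])
  have "((\<lambda>x::real. cos x / sin x - 1 / x) \<longlongrightarrow> 0) (at_right 0)" by real_asymp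
  then show "(ln_sinc' \<longlongrightarrow> ln_sinc' 0) (at_right 0)"
    by (rule tendsto_eq_rhs[OF Lim_transform_eventually])
      (auto simp: ln_sinc'_def cot_def elim!: eventually_mono[OF eventually_at_right_less])
next
  fix x assume "0 < x" "x \<le> b"
  then have x: "0 < x" "x < pi" using assms by auto
  have "isCont (\<lambda>y. cot y - 1 / y) x"
    using x sin_gt_zero[OF x] by (auto simp: cot_def intro!: continuous_intros)
  then show "isCont ln_sinc' x"
    using ln_sinc_eventually_eq[OF x] by (subst isCont_cong) (auto elim!: eventually_mono)
qed

lemma pochhammer_ratio_tendsto:
  fixes z w :: real
  assumes "0 < z" "0 < w"
  shows "(\<lambda>m. pochhammer z m / pochhammer w m * real m powr (w - z)) \<longlonglongrightarrow> Gamma w / Gamma z"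
proof -
  have "Gamma z \<noteq> 0" using Gamma_real_pos[OF assms(1)] by simp
  then have "(\<lambda>m. Gamma_series' w m / Gamma_series' z m) \<longlonglongrightarrow> Gamma w / Gamma z"
    by (intro tendsto_divide Gamma_series'_LIMSEQ)
  moreover have "\<forall>\<^sub>F m in sequentially.
      Gamma_series' w m / Gamma_series' z m = pochhammer z m / pochhammer w m * real m powr (w - z)"
  proof (rule eventually_sequentiallyI[of 1])
    fix m :: nat assume "1 \<le> m"
    moreover have "pochhammer z m > 0" "pochhammer w m > 0" using assms by (auto intro: pochhammer_pos)
    ultimately show "Gamma_series' w m / Gamma_series' z m = pochhammer z m / pochhammer w m * real m powr (w - z)"
      by (simp add: Gamma_series'_def powr_def exp_diff left_diff_distrib field_simps)
  qed
  ultimately show ?thesis by (rule Lim_transform_eventually)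
qed

definition sin_ratio_prod :: "real \<Rightarrow> real \<Rightarrow> real \<Rightarrow> nat \<Rightarrow> real" where
  "sin_ratio_prod h c d m = (\<Prod>k<m. sin (h * (2 * real k + 1 + c)) / sin (h * (2 * real k + 1 + d)))"

lemma sin_ratio_prod_eq_pochhammer:
  assumes h: "0 < h" and c: "c \<in> {0..1}" and d: "d \<in> {0..1}" and m: "2 * h * real m < pi"
  shows "sin_ratio_prod h c d m = pochhammer ((1 + c) / 2) m / pochhammer ((1 + d) / 2) m *
           exp (\<Sum>k<m. ln_sinc (h * (2 * real k + 1 + c)) - ln_sinc (h * (2 * real k + 1 + d)))"
proof -
  have sin_eq: "sin (h * (2 * real k + 1 + e)) = 2 * h * ((1 + e) / 2 + real k) * exp (ln_sinc (h * (2 * real k + 1 + e)))"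
    if "k < m" "e \<in> {0..1}" for k e
  proof -
    have "h * (2 * real k + 1 + e) \<le> h * (2 * real m)"
      using that h by (intro mult_left_mono) auto
    also have "\<dots> < pi" using m by simp
    finally have "0 < h * (2 * real k + 1 + e)" "h * (2 * real k + 1 + e) < pi"
      using that h by auto
    from sin_eq_mult_exp_ln_sinc[OF this] show ?thesis by (simp add: algebra_simps)
  qed
  have "sin_ratio_prod h c d m = (\<Prod>k<m. ((1 + c) / 2 + real k) / ((1 + d) / 2 + real k) *
      exp (ln_sinc (h * (2 * real k + 1 + c)) - ln_sinc (h * (2 * real k + 1 + d))))"
    unfolding sin_ratio_prod_def using h c d by (intro prod.cong) (auto simp: sin_eq exp_diff)
  also have "\<dots> = pochhammer ((1 + c) / 2) m / pochhammer ((1 + d) / 2) m *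
      exp (\<Sum>k<m. ln_sinc (h * (2 * real k + 1 + c)) - ln_sinc (h * (2 * real k + 1 + d)))"
    by (simp add: prod.distrib prod_dividef exp_sum pochhammer_prod atLeast0LessThan)
  finally show ?thesis .
qed

lemma sin_ratio_prod_tendsto:
  fixes h :: "nat \<Rightarrow> real"
  assumes c: "c \<in> {0..1}" and d: "d \<in> {0..1}" and b: "0 < b" "b < pi"
    and h_pos: "\<And>m. h m > 0" and h_bound: "\<And>m. 2 * h m * real m \<le> b"
    and h_lim: "h \<longlonglongrightarrow> 0" and end_lim: "(\<lambda>m. 2 * h m * real m) \<longlonglongrightarrow> b"
  shows "(\<lambda>m. sin_ratio_prod (h m) c d m * real m powr ((d - c) / 2))
           \<longlonglongrightarrow> Gamma ((1 + d) / 2) / Gamma ((1 + c) / 2) * (sin b / b) powr ((c - d) / 2)"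
proof -
  have exponent: "(d - c) / 2 = (1 + d) / 2 - (1 + c) / 2" by (simp add: field_simps)
  have "sin_ratio_prod (h m) c d m * real m powr ((d - c) / 2) =
      pochhammer ((1 + c) / 2) m / pochhammer ((1 + d) / 2) m * real m powr ((1 + d) / 2 - (1 + c) / 2) *
      exp (\<Sum>k<m. ln_sinc (h m * (2 * real k + 1 + c)) - ln_sinc (h m * (2 * real k + 1 + d)))" for m
    unfolding exponent using h_bound[of m] b
    by (simp add: sin_ratio_prod_eq_pochhammer[OF h_pos c d] mult_ac)
  moreover have "(\<lambda>m. pochhammer ((1 + c) / 2) m / pochhammer ((1 + d) / 2) m * real m powr ((1 + d) / 2 - (1 + c) / 2) *
      exp (\<Sum>k<m. ln_sinc (h m * (2 * real k + 1 + c)) - ln_sinc (h m * (2 * real k + 1 + d))))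
      \<longlonglongrightarrow> Gamma ((1 + d) / 2) / Gamma ((1 + c) / 2) * exp ((c - d) / 2 * (ln_sinc b - ln_sinc 0))"
  proof (intro tendsto_mult pochhammer_ratio_tendsto tendsto_exp)
    show "(\<lambda>m. \<Sum>k<m. ln_sinc (h m * (2 * real k + 1 + c)) - ln_sinc (h m * (2 * real k + 1 + d)))
        \<longlonglongrightarrow> (c - d) / 2 * (ln_sinc b - ln_sinc 0)"
      using b by (intro sum_shifted_differences_tendsto[where f' = ln_sinc'] continuous_on_ln_sinc
          continuous_on_ln_sinc' has_real_derivative_ln_sinc c d h_pos h_bound h_lim end_lim) auto
  qed (use c d in auto)
  moreover have "exp ((c - d) / 2 * (ln_sinc b - ln_sinc 0)) = (sin b / b) powr ((c - d) / 2)"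
    using b sin_gt_zero[OF b] by (simp add: ln_sinc_def powr_def)
  ultimately show ?thesis by simp
qed

lemma sin_ratio_prod_half_pi_tendsto:
  assumes s: "0 < s" and c: "c \<in> {0..1}" and d: "d \<in> {0..1}"
  shows "(\<lambda>m. sin_ratio_prod (pi / (2 * (2 * real m + s))) c d m * real m powr ((d - c) / 2))
           \<longlonglongrightarrow> Gamma ((1 + d) / 2) / Gamma ((1 + c) / 2) * (2 / pi) powr ((c - d) / 2)"
proof -
  have "(\<lambda>m. sin_ratio_prod (pi / (2 * (2 * real m + s))) c d m * real m powr ((d - c) / 2))
      \<longlonglongrightarrow> Gamma ((1 + d) / 2) / Gamma ((1 + c) / 2) * (sin (pi / 2) / (pi / 2)) powr ((c - d) / 2)"
  proof (rule sin_ratio_prod_tendsto[OF c d])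
    show "(\<lambda>m. pi / (2 * (2 * real m + s))) \<longlonglongrightarrow> 0"
      "(\<lambda>m. 2 * (pi / (2 * (2 * real m + s))) * real m) \<longlonglongrightarrow> pi / 2"
      using s by real_asymp+
    show "2 * (pi / (2 * (2 * real m + s))) * real m \<le> pi / 2" for m
      using s by (simp add: field_simps)
  qed (use s in \<open>auto intro: add_nonneg_pos\<close>)
  then show ?thesis by simp
qed

lemma psi_altdef:
  assumes "T > 0"
  shows "psi N T j = pi * (2 * real j - 1 + 2 / real T) / (real N - 1 + 2 / real T)"
proof -
  have "pi * (2 * real j - 1 + 2 / real T) / (real N - 1 + 2 / real T)
      = pi * (2 * real j - 1 + 2 / real T) * real T / ((real N - 1 + 2 / real T) * real T)"
    using assms by simp
  also have "\<dots> = psi N T j"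
    using assms by (simp add: psi_def algebra_simps)
  finally show ?thesis ..
qed

lemma cot_half_psi_eq:
  assumes T: "T > 0" and N: "real N = 2 * real m + 1 + c" and c: "0 \<le> c" and j: "1 \<le> j" "j \<le> m"
  defines "h \<equiv> pi / (2 * (2 * real m + c + 2 / real T))"
  shows "cot (psi N T j / 2) = sin (h * (2 * real (m - j) + 1 + c)) / sin (h * (2 * real (j - 1) + 1 + 2 / real T))"
proof -
  define a where "a = 2 / real T"
  have pos: "2 * real m + c + a > 0" using T c by (simp add: a_def add_nonneg_pos)
  have psi: "psi N T j = pi * (2 * real j - 1 + a) / (2 * real m + c + a)"
    by (simp add: psi_altdef[OF T] N a_def)
  have half_psi: "psi N T j / 2 = h * (2 * real (j - 1) + 1 + a)"
    using j pos unfolding psi h_def a_def[symmetric] by (simp add: of_nat_diff field_simps)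
  have "pi / 2 - psi N T j / 2 = h * (2 * real (m - j) + 1 + c)"
    using j pos unfolding psi h_def a_def[symmetric] by (simp add: of_nat_diff field_simps)
  then show ?thesis by (simp add: cot_def cos_sin_eq half_psi a_def)
qed

lemma prod_cot_half_psi_eq:
  assumes T: "T > 0" and N: "real N = 2 * real m + 1 + c" and c: "0 \<le> c"
  shows "(\<Prod>j = 1..m. (cot (psi N T j / 2))^2)
           = (sin_ratio_prod (pi / (2 * (2 * real m + c + 2 / real T))) c (2 / real T) m)^2"
proof -
  define h where "h = pi / (2 * (2 * real m + c + 2 / real T))"
  define F where "F k = sin (h * (2 * real k + 1 + c))" for k
  define G where "G k = sin (h * (2 * real k + 1 + 2 / real T))" for k
  have "(\<Prod>j = 1..m. (cot (psi N T j / 2))^2) = (\<Prod>j = 1..m. cot (psi N T j / 2))^2"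
    by (rule prod_power_distrib[symmetric])
  also have "(\<Prod>j = 1..m. cot (psi N T j / 2)) = (\<Prod>j = 1..m. F (m - j) / G (j - 1))"
    unfolding F_def G_def h_def using cot_half_psi_eq[OF T N c] by (intro prod.cong) auto
  also have "(\<Prod>j = 1..m. F (m - j) / G (j - 1)) = (\<Prod>i<m. F (m - Suc i)) / (\<Prod>i<m. G i)"
    by (simp add: prod.atLeast1_atMost_eq prod_dividef)
  also have "(\<Prod>i<m. F (m - Suc i)) = (\<Prod>i<m. F i)" by (rule prod.nat_diff_reindex)
  finally show ?thesis
    by (simp add: sin_ratio_prod_def prod_dividef F_def G_def h_def)
qed

lemma P_odd_eq:
  assumes "T > 0"
  shows "P T (2 * m + 1) = (sin_ratio_prod (pi / (2 * (2 * real m + 2 / real T))) 0 (2 / real T) m)^2"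
  using prod_cot_half_psi_eq[OF assms, of "2 * m + 1" m 0] by (simp add: P_def)

lemma P_even_eq:
  assumes "T > 0"
  shows "P T (2 * m + 2) = (sin_ratio_prod (pi / (2 * (2 * real m + 1 + 2 / real T))) 1 (2 / real T) m)^2
                             / (2 * real m + 1 + 2 / real T)"
proof -
  have "real T / (2 + (real (2 * m + 2) - 1) * real T) = 1 / (2 * real m + 1 + 2 / real T)"
    using assms by (simp add: field_simps)
  then show ?thesis
    using prod_cot_half_psi_eq[OF assms, of "2 * m + 2" m 1] by (simp add: P_def add_ac)
qed

lemma P_odd_tendsto:
  assumes "T \<ge> 2"
  shows "(\<lambda>m. P T (2 * m + 1) * real (2 * m + 1) powr (2 / real T))
           \<longlonglongrightarrow> pi powr (2 / real T - 1) * (Gamma ((1 + 2 / real T) / 2))^2"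
proof -
  have T: "T > 0" using assms by simp
  define a where "a = 2 / real T"
  have a: "0 < a" "a \<le> 1" using assms by (auto simp: a_def field_simps)
  define Q where "Q m = sin_ratio_prod (pi / (2 * (2 * real m + a))) 0 a m" for m
  define G where "G = Gamma ((1 + a) / 2)"
  have Q_lim: "(\<lambda>m. Q m * real m powr ((a - 0) / 2)) \<longlonglongrightarrow> G / Gamma (1 / 2) * (2 / pi) powr ((0 - a) / 2)"
    unfolding Q_def G_def using sin_ratio_prod_half_pi_tendsto[of a 0 a] a by simp
  have ratio_lim: "(\<lambda>m. ((2 * real m + 1) / real m) powr a) \<longlonglongrightarrow> 2 powr a" by real_asymp
  have "(\<lambda>m. (Q m * real m powr ((a - 0) / 2))^2 * ((2 * real m + 1) / real m) powr a)
      \<longlonglongrightarrow> (G / Gamma (1 / 2) * (2 / pi) powr ((0 - a) / 2))^2 * 2 powr a"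
    by (rule tendsto_mult[OF tendsto_power[OF Q_lim] ratio_lim])
  also have "(G / Gamma (1 / 2) * (2 / pi) powr ((0 - a) / 2))^2 * 2 powr a = pi powr (a - 1) * G^2"
    by (simp add: Gamma_one_half_real power_mult_distrib power_divide powr_power powr_divide
        powr_minus powr_diff field_simps)
  finally have lim: "(\<lambda>m. (Q m * real m powr ((a - 0) / 2))^2 * ((2 * real m + 1) / real m) powr a)
      \<longlonglongrightarrow> pi powr (a - 1) * G^2" .
  have "\<forall>\<^sub>F m in sequentially. (Q m * real m powr ((a - 0) / 2))^2 * ((2 * real m + 1) / real m) powr a
      = P T (2 * m + 1) * real (2 * m + 1) powr a"
  proof (rule eventually_sequentiallyI[of 1])
    fix m :: nat assume "1 \<le> m"
    then have "(real m powr (a / 2))^2 = real m powr a"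
      by (simp add: power2_eq_square powr_add[symmetric])
    with \<open>1 \<le> m\<close> show "(Q m * real m powr ((a - 0) / 2))^2 * ((2 * real m + 1) / real m) powr a
        = P T (2 * m + 1) * real (2 * m + 1) powr a"
      unfolding P_odd_eq[OF T] Q_def a_def[symmetric]
      by (simp add: power_mult_distrib powr_divide add_ac)
  qed
  with lim show ?thesis unfolding a_def G_def by (rule Lim_transform_eventually)
qed

lemma P_even_tendsto:
  assumes "T \<ge> 2"
  shows "(\<lambda>m. P T (2 * m + 2) * real (2 * m + 2) powr (2 / real T))
           \<longlonglongrightarrow> pi powr (2 / real T - 1) * (Gamma ((1 + 2 / real T) / 2))^2"
proof -
  have T: "T > 0" using assms by simp
  define a where "a = 2 / real T"
  have a: "0 < a" "a \<le> 1" using assms by (auto simp: a_def field_simps)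
  define Q where "Q m = sin_ratio_prod (pi / (2 * (2 * real m + 1 + a))) 1 a m" for m
  define G where "G = Gamma ((1 + a) / 2)"
  have Q_lim: "(\<lambda>m. Q m * real m powr ((a - 1) / 2)) \<longlonglongrightarrow> G / Gamma ((1 + 1) / 2) * (2 / pi) powr ((1 - a) / 2)"
    unfolding Q_def G_def using sin_ratio_prod_half_pi_tendsto[of "1 + a" 1 a] a by (simp add: add.assoc)
  have ratio_lim: "(\<lambda>m. ((2 * real m + 2) / real m) powr a) \<longlonglongrightarrow> 2 powr a" by real_asymp
  have factor_lim: "(\<lambda>m. real m / (2 * real m + 1 + a)) \<longlonglongrightarrow> 1 / 2" using a by real_asymp
  have "(\<lambda>m. real m / (2 * real m + 1 + a) * (Q m * real m powr ((a - 1) / 2))^2 * ((2 * real m + 2) / real m) powr a)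
      \<longlonglongrightarrow> 1 / 2 * (G / Gamma ((1 + 1) / 2) * (2 / pi) powr ((1 - a) / 2))^2 * 2 powr a"
    by (rule tendsto_mult[OF tendsto_mult[OF factor_lim tendsto_power[OF Q_lim]] ratio_lim])
  also have "1 / 2 * (G / Gamma ((1 + 1) / 2) * (2 / pi) powr ((1 - a) / 2))^2 * 2 powr a = pi powr (a - 1) * G^2"
  proof -
    have "((2 / pi) powr ((1 - a) / 2))^2 = (2 / pi) powr (1 - a)"
      by (simp add: power2_eq_square powr_add[symmetric])
    then show ?thesis by (simp add: power_mult_distrib powr_divide powr_diff field_simps)
  qed
  finally have lim: "(\<lambda>m. real m / (2 * real m + 1 + a) * (Q m * real m powr ((a - 1) / 2))^2 * ((2 * real m + 2) / real m) powr a)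
      \<longlonglongrightarrow> pi powr (a - 1) * G^2" .
  have "\<forall>\<^sub>F m in sequentially. real m / (2 * real m + 1 + a) * (Q m * real m powr ((a - 1) / 2))^2 * ((2 * real m + 2) / real m) powr a
      = P T (2 * m + 2) * real (2 * m + 2) powr a"
  proof (rule eventually_sequentiallyI[of 1])
    fix m :: nat assume "1 \<le> m"
    then have m: "real m > 0" "real m powr a > 0" and
      sq: "(real m powr ((a - 1) / 2))^2 = real m powr a / real m"
      by (simp_all add: power2_eq_square powr_add[symmetric] powr_diff)
    define D where "D = 2 * real m + 1 + a"
    have D: "D > 0" using a by (simp add: D_def)
    have "real m / D * (Q m * real m powr ((a - 1) / 2))^2 * ((2 * real m + 2) / real m) powr a
        = real m / D * ((Q m)^2 * (real m powr a / real m)) * ((2 * real m + 2) powr a / real m powr a)"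
      by (simp only: power_mult_distrib sq powr_divide)
    also have "\<dots> = (Q m)^2 / D * (2 * real m + 2) powr a"
      using m D by (simp add: field_simps)
    also have "\<dots> = P T (2 * m + 2) * real (2 * m + 2) powr a"
      unfolding P_even_eq[OF T] Q_def D_def a_def[symmetric] by (simp add: add_ac)
    finally show "real m / (2 * real m + 1 + a) * (Q m * real m powr ((a - 1) / 2))^2 * ((2 * real m + 2) / real m) powr a
        = P T (2 * m + 2) * real (2 * m + 2) powr a" unfolding D_def .
  qed
  with lim show ?thesis unfolding a_def G_def by (rule Lim_transform_eventually)
qed

theorem theorem1:
  fixes T :: nat
  assumes "T \<ge> 3"
  shows "(\<lambda>N. P T N * real N powr (2 / real T)) \<longlonglongrightarrow>
           pi powr ((2 - real T) / real T) * (Gamma ((real T + 2) / (2 * real T)))^2"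
proof -
  have T: "T \<ge> 2" using assms by simp
  have exponents: "(2 - real T) / real T = 2 / real T - 1" "(real T + 2) / (2 * real T) = (1 + 2 / real T) / 2"
    using assms by (simp_all add: field_simps)
  show ?thesis unfolding exponents
  proof (rule limseq_even_odd)
    show "(\<lambda>m. P T (2 * m) * real (2 * m) powr (2 / real T)) \<longlonglongrightarrow> pi powr (2 / real T - 1) * (Gamma ((1 + 2 / real T) / 2))^2"
      using P_even_tendsto[OF T] by (subst filterlim_sequentially_Suc[symmetric]) simp
  qed (rule P_odd_tendsto[OF T])
qed

end
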